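(* If $\mathfrak M$ is a saturated structure of cardinality $\kappa$ with $\kappa=\kappa^\omega$, then $\mathfrak M$ has the homomorphism lifting property.
   Context: Signatures are relational (possibly with constants). An infinite $\mathfrak M$ is saturated if for every sequence of fewer than $|M|$ parameters, every set of first-order formulas in one free variable over these parameters consistent with the theory of $\mathfrak M$ with the parameters named is realised in $M$. $\mathfrak M$ has the homomorphism lifting property if for all $a_1,\dots,a_k\in M^\omega$ and $b_1,\dots,b_k\in M$ such that every pp-$(\tau\cup\{c_1,\dots,c_k\})$-sentence (existentially quantified conjunction of atoms) true in $(\mathfrak M^\omega;a_1,\dots,a_k)$ is true in $(\mathfrak M;b_1,\dots,b_k)$, there is a homomorphism $f:\mathfrak M^\omega\to\mathfrak M$ (direct power) with $f(a_i)=b_i$ for all $i$. *)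

theory Defs
  imports Main "HOL-Library.Equipollence"
begin

record ('r, 'c, 'a) struct =
  Univ :: "'a set"
  Rel  :: "'r \<Rightarrow> 'a list \<Rightarrow> bool"
  Cst  :: "'c \<Rightarrow> 'a"

definition wf_struct :: "('r \<Rightarrow> nat) \<Rightarrow> ('r, 'c, 'a) struct \<Rightarrow> bool" where
  "wf_struct ar M \<longleftrightarrow> Univ M \<noteq> {}
     \<and> (\<forall>c. Cst M c \<in> Univ M)
     \<and> (\<forall>R xs. Rel M R xs \<longrightarrow> length xs = ar R \<and> set xs \<subseteq> Univ M)"

datatype ('c, 'p) trm = Var nat | Con 'c | Par 'p

datatype ('r, 'c, 'p) fm =
    Eq "('c, 'p) trm" "('c, 'p) trm"
  | Atom 'r "('c, 'p) trm list"
  | Neg "('r, 'c, 'p) fm"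
  | Conj "('r, 'c, 'p) fm" "('r, 'c, 'p) fm"
  | Ex nat "('r, 'c, 'p) fm"

fun teval :: "('r, 'c, 'a) struct \<Rightarrow> ('p \<Rightarrow> 'a) \<Rightarrow> (nat \<Rightarrow> 'a) \<Rightarrow> ('c, 'p) trm \<Rightarrow> 'a" where
  "teval M p e (Var x) = e x"
| "teval M p e (Con c) = Cst M c"
| "teval M p e (Par q) = p q"

fun sat :: "('r, 'c, 'a) struct \<Rightarrow> ('p \<Rightarrow> 'a) \<Rightarrow> (nat \<Rightarrow> 'a) \<Rightarrow> ('r, 'c, 'p) fm \<Rightarrow> bool" where
  "sat M p e (Eq s t) = (teval M p e s = teval M p e t)"
| "sat M p e (Atom R ts) = Rel M R (map (teval M p e) ts)"
| "sat M p e (Neg \<phi>) = (\<not> sat M p e \<phi>)"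
| "sat M p e (Conj \<phi> \<psi>) = (sat M p e \<phi> \<and> sat M p e \<psi>)"
| "sat M p e (Ex x \<phi>) = (\<exists>a\<in>Univ M. sat M p (e(x := a)) \<phi>)"

fun tfv :: "('c, 'p) trm \<Rightarrow> nat set" where
  "tfv (Var x) = {x}" | "tfv (Con c) = {}" | "tfv (Par q) = {}"

fun tpar :: "('c, 'p) trm \<Rightarrow> 'p set" where
  "tpar (Var x) = {}" | "tpar (Con c) = {}" | "tpar (Par q) = {q}"

fun fv :: "('r, 'c, 'p) fm \<Rightarrow> nat set" where
  "fv (Eq s t) = tfv s \<union> tfv t"
| "fv (Atom R ts) = (\<Union>t\<in>set ts. tfv t)"
| "fv (Neg \<phi>) = fv \<phi>"
| "fv (Conj \<phi> \<psi>) = fv \<phi> \<union> fv \<psi>"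
| "fv (Ex x \<phi>) = fv \<phi> - {x}"

fun params :: "('r, 'c, 'p) fm \<Rightarrow> 'p set" where
  "params (Eq s t) = tpar s \<union> tpar t"
| "params (Atom R ts) = (\<Union>t\<in>set ts. tpar t)"
| "params (Neg \<phi>) = params \<phi>"
| "params (Conj \<phi> \<psi>) = params \<phi> \<union> params \<psi>"
| "params (Ex x \<phi>) = params \<phi>"

text \<open>Truth of a sentence (no free variables): holds under every assignment into
 the carrier (equivalently under some, since the carrier is nonempty).\<close>

definition true_in :: "('r, 'c, 'a) struct \<Rightarrow> ('p \<Rightarrow> 'a) \<Rightarrow> ('r, 'c, 'p) fm \<Rightarrow> bool" where
  "true_in M p \<phi> \<longleftrightarrow> (\<forall>e. range e \<subseteq> Univ M \<longrightarrow> sat M p e \<phi>)"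

fun is_atom_conj :: "('r, 'c, 'p) fm \<Rightarrow> bool" where
  "is_atom_conj (Eq s t) = True"
| "is_atom_conj (Atom R ts) = True"
| "is_atom_conj (Conj \<phi> \<psi>) = (is_atom_conj \<phi> \<and> is_atom_conj \<psi>)"
| "is_atom_conj _ = False"

fun is_pp :: "('r, 'c, 'p) fm \<Rightarrow> bool" where
  "is_pp (Ex x \<phi>) = is_pp \<phi>"
| "is_pp \<phi> = is_atom_conj \<phi>"

text \<open>A set of formulas in the single free variable 0 with parameters from the
 carrier (parameter symbols are the elements themselves, named by the identity).
 Consistency with the theory of M with the parameters named is expressed as
 finite satisfiability in M (equivalent by compactness, since that theory is complete).\<close>

definition realised :: "('r, 'c, 'a) struct \<Rightarrow> ('r, 'c, 'a) fm set \<Rightarrow> bool" where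
  "realised M \<Sigma> \<longleftrightarrow> (\<exists>a\<in>Univ M. \<forall>\<phi>\<in>\<Sigma>. sat M id (\<lambda>_. a) \<phi>)"

definition consistent_with_theory :: "('r, 'c, 'a) struct \<Rightarrow> ('r, 'c, 'a) fm set \<Rightarrow> bool" where
  "consistent_with_theory M \<Sigma> \<longleftrightarrow> (\<forall>\<Sigma>0 \<subseteq> \<Sigma>. finite \<Sigma>0 \<longrightarrow> realised M \<Sigma>0)"

definition saturated :: "('r, 'c, 'a) struct \<Rightarrow> bool" where
  "saturated M \<longleftrightarrow> infinite (Univ M) \<and>
     (\<forall>A \<Sigma>. A \<subseteq> Univ M \<longrightarrow> A \<prec> Univ M \<longrightarrow>
        (\<forall>\<phi>\<in>\<Sigma>. fv \<phi> \<subseteq> {0} \<and> params \<phi> \<subseteq> A) \<longrightarrow>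
        consistent_with_theory M \<Sigma> \<longrightarrow> realised M \<Sigma>)"

definition power_omega :: "('r, 'c, 'a) struct \<Rightarrow> ('r, 'c, nat \<Rightarrow> 'a) struct" where
  "power_omega M = \<lparr> Univ = {f. \<forall>n. f n \<in> Univ M},
     Rel = (\<lambda>R fs. \<forall>n. Rel M R (map (\<lambda>f. f n) fs)),
     Cst = (\<lambda>c n. Cst M c) \<rparr>"

definition is_hom :: "('r, 'c, 'a) struct \<Rightarrow> ('r, 'c, 'b) struct \<Rightarrow> ('a \<Rightarrow> 'b) \<Rightarrow> bool" where
  "is_hom A B h \<longleftrightarrow> (\<forall>x\<in>Univ A. h x \<in> Univ B)
     \<and> (\<forall>R xs. set xs \<subseteq> Univ A \<longrightarrow> Rel A R xs \<longrightarrow> Rel B R (map h xs))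
     \<and> (\<forall>c. h (Cst A c) = Cst B c)"

text \<open>Homomorphism lifting property. The k new constants c_1..c_k are the
 parameter symbols 0..k-1 (type nat), interpreted by the lists as and bs.\<close>

definition hom_lifting :: "('r, 'c, 'a) struct \<Rightarrow> bool" where
  "hom_lifting M \<longleftrightarrow>
    (\<forall>(as :: (nat \<Rightarrow> 'a) list) (bs :: 'a list).
       length as = length bs \<longrightarrow>
       set as \<subseteq> Univ (power_omega M) \<longrightarrow> set bs \<subseteq> Univ M \<longrightarrow>
       (\<forall>\<phi> :: ('r, 'c, nat) fm. is_pp \<phi> \<longrightarrow> fv \<phi> = {} \<longrightarrow> params \<phi> \<subseteq> {..<length as} \<longrightarrow>
           true_in (power_omega M) (\<lambda>i. as ! i) \<phi> \<longrightarrow> true_in M (\<lambda>i. bs ! i) \<phi>) \<longrightarrow>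
       (\<exists>h. is_hom (power_omega M) M h \<and> (\<forall>i < length as. h (as ! i) = bs ! i)))"

end

theory Submission
  imports Defs
begin

text \<open>The homomorphism is the union of a maximal partial map G from M^\<omega> to M that preserves
  pp-formulas with parameters in its domain; the hypothesis says exactly that the finite map
  a_i \<mapsto> b_i is such a map. To put a new point a into the domain, one realises in M the type of
  all pp-formulas \<phi>(x, G d) with \<phi>(a, d) true in M^\<omega>. It is finitely satisfiable because finitely
  many such formulas merge into one, which G preserves; saturation realises it as long as the
  domain of G has fewer than |M| elements. Because |M^\<omega>| = |M|, this is ensured by
  enumerating M^\<omega> in order type |M| and always extending at the least missing point. A
  pp-preserving map defined everywhere preserves atoms and constants: it is a homomorphism.\<close>

section \<open>Atomic formulas, substitution and existential closure\<close>

fun atomic :: "('r, 'c, 'p) fm \<Rightarrow> bool" where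
  "atomic (Eq s t) = True"
| "atomic (Atom R ts) = True"
| "atomic _ = False"

fun conj_list :: "('r, 'c, 'p) fm list \<Rightarrow> ('r, 'c, 'p) fm" where
  "conj_list [] = Eq (Var 0) (Var 0)"
| "conj_list (\<phi> # L) = Conj \<phi> (conj_list L)"

fun subst_trm :: "(nat \<Rightarrow> ('c, 'q) trm) \<Rightarrow> ('p \<Rightarrow> ('c, 'q) trm) \<Rightarrow> ('c, 'p) trm \<Rightarrow> ('c, 'q) trm" where
  "subst_trm \<sigma> \<tau> (Var n) = \<sigma> n"
| "subst_trm \<sigma> \<tau> (Con c) = Con c"
| "subst_trm \<sigma> \<tau> (Par q) = \<tau> q"

text \<open>Only used on atomic formulas; the last equation is a junk value.\<close>

fun subst_atom :: "(nat \<Rightarrow> ('c, 'q) trm) \<Rightarrow> ('p \<Rightarrow> ('c, 'q) trm) \<Rightarrow> ('r, 'c, 'p) fm \<Rightarrow> ('r, 'c, 'q) fm" where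
  "subst_atom \<sigma> \<tau> (Eq s t) = Eq (subst_trm \<sigma> \<tau> s) (subst_trm \<sigma> \<tau> t)"
| "subst_atom \<sigma> \<tau> (Atom R ts) = Atom R (map (subst_trm \<sigma> \<tau>) ts)"
| "subst_atom \<sigma> \<tau> _ = Eq (Var 0) (Var 0)"

definition rename_vars :: "(nat \<Rightarrow> nat) \<Rightarrow> ('r, 'c, 'p) fm \<Rightarrow> ('r, 'c, 'p) fm" where
  "rename_vars f = subst_atom (\<lambda>n. Var (f n)) Par"

definition map_params :: "('p \<Rightarrow> 'q) \<Rightarrow> ('r, 'c, 'p) fm \<Rightarrow> ('r, 'c, 'q) fm" where
  "map_params g = subst_atom Var (\<lambda>q. Par (g q))"

definition ex_closure :: "nat set \<Rightarrow> ('r, 'c, 'p) fm \<Rightarrow> ('r, 'c, 'p) fm" where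
  "ex_closure V \<phi> = foldr Ex (sorted_list_of_set (fv \<phi> - V)) \<phi>"

lemma atomic_subst_atom [simp]: "atomic (subst_atom \<sigma> \<tau> \<phi>)"
  by (cases \<phi>) auto

lemma teval_subst_trm:
  "teval N p e (subst_trm \<sigma> \<tau> t) = teval N (\<lambda>q. teval N p e (\<tau> q)) (\<lambda>n. teval N p e (\<sigma> n)) t"
  by (cases t) auto

lemma sat_subst_atom:
  "atomic \<phi> \<Longrightarrow>
    sat N p e (subst_atom \<sigma> \<tau> \<phi>) = sat N (\<lambda>q. teval N p e (\<tau> q)) (\<lambda>n. teval N p e (\<sigma> n)) \<phi>"
  by (cases \<phi>) (auto simp: teval_subst_trm comp_def)

lemma params_subst_atom:
  "atomic \<phi> \<Longrightarrow> params (subst_atom \<sigma> \<tau> \<phi>) \<subseteq> (\<Union>n\<in>fv \<phi>. tpar (\<sigma> n)) \<union> (\<Union>q\<in>params \<phi>. tpar (\<tau> q))"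
proof -
  have "tpar (subst_trm \<sigma> \<tau> t) \<subseteq> (\<Union>n\<in>tfv t. tpar (\<sigma> n)) \<union> (\<Union>q\<in>tpar t. tpar (\<tau> q))" for t
    by (cases t) auto
  then show "atomic \<phi> \<Longrightarrow> ?thesis"
    by (cases \<phi>) (auto, blast+)
qed

lemma atomic_rename_vars [simp]: "atomic (rename_vars f \<phi>)"
  by (simp add: rename_vars_def)

lemma atomic_map_params [simp]: "atomic (map_params g \<phi>)"
  by (simp add: map_params_def)

lemma params_rename_vars: "atomic \<phi> \<Longrightarrow> params (rename_vars f \<phi>) \<subseteq> params \<phi>"
  using params_subst_atom[of \<phi> "\<lambda>n. Var (f n)" Par] by (auto simp: rename_vars_def)

lemma params_map_params: "atomic \<phi> \<Longrightarrow> params (map_params g \<phi>) \<subseteq> g ` params \<phi>"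
  using params_subst_atom[of \<phi> Var "\<lambda>q. Par (g q)"] by (auto simp: map_params_def)

lemma sat_rename_vars: "atomic \<phi> \<Longrightarrow> sat N p e (rename_vars f \<phi>) = sat N p (e \<circ> f) \<phi>"
  by (simp add: rename_vars_def sat_subst_atom comp_def)

lemma sat_map_params: "atomic \<phi> \<Longrightarrow> sat N p e (map_params g \<phi>) = sat N (p \<circ> g) e \<phi>"
  by (simp add: map_params_def sat_subst_atom comp_def)

lemma sat_conj_list: "sat N p e (conj_list L) = (\<forall>\<phi>\<in>set L. sat N p e \<phi>)"
  by (induction L) auto

lemma params_conj_list: "params (conj_list L) = (\<Union>\<phi>\<in>set L. params \<phi>)"
  by (induction L) auto

lemma is_atom_conj_conj_list: "\<forall>\<phi>\<in>set L. atomic \<phi> \<Longrightarrow> is_atom_conj (conj_list L)"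
proof (induction L)
  case (Cons \<phi> L)
  then show ?case by (cases \<phi>) auto
qed auto

lemma is_pp_conj_list: "\<forall>\<phi>\<in>set L. atomic \<phi> \<Longrightarrow> is_pp (conj_list L)"
  using is_atom_conj_conj_list[of L] by (cases L) auto

lemma is_pp_foldr_Ex: "is_pp (foldr Ex vs \<phi>) = is_pp \<phi>"
  by (induction vs) auto

lemma fv_foldr_Ex: "fv (foldr Ex vs \<phi>) = fv \<phi> - set vs"
  by (induction vs) auto

lemma params_foldr_Ex: "params (foldr Ex vs \<phi>) = params \<phi>"
  by (induction vs) auto

lemma finite_tfv [simp]: "finite (tfv t)"
  by (cases t) auto

lemma finite_tpar [simp]: "finite (tpar t)"
  by (cases t) auto

lemma finite_fv: "finite (fv \<phi>)"
  by (induction \<phi>) auto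

lemma finite_params: "finite (params \<phi>)"
  by (induction \<phi>) auto

lemma teval_cong:
  "(\<forall>x\<in>tfv t. e x = e' x) \<Longrightarrow> (\<forall>q\<in>tpar t. p q = p' q) \<Longrightarrow> teval N p e t = teval N p' e' t"
  by (cases t) auto

lemma sat_cong:
  "(\<forall>x\<in>fv \<phi>. e x = e' x) \<Longrightarrow> (\<forall>q\<in>params \<phi>. p q = p' q) \<Longrightarrow> sat N p e \<phi> = sat N p' e' \<phi>"
proof (induction \<phi> arbitrary: e e')
  case (Eq s t)
  then have "teval N p e s = teval N p' e' s" "teval N p e t = teval N p' e' t"
    by (auto intro: teval_cong)
  then show ?case by simp
next
  case (Atom R ts)
  then have "teval N p e u = teval N p' e' u" if "u \<in> set ts" for u
    using that by (intro teval_cong) auto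
  then show ?case by (simp cong: map_cong)
next
  case (Ex x \<phi>)
  have "sat N p (e(x:=a)) \<phi> = sat N p' (e'(x:=a)) \<phi>" for a
    using Ex.prems by (intro Ex.IH) auto
  then show ?case by simp
next
  case (Neg \<phi>)
  then show ?case by simp
next
  case (Conj \<phi>1 \<phi>2)
  have "sat N p e \<phi>1 = sat N p' e' \<phi>1"
    using Conj.prems by (intro Conj.IH) auto
  moreover have "sat N p e \<phi>2 = sat N p' e' \<phi>2"
    using Conj.prems by (intro Conj.IH) auto
  ultimately
  show ?case by simp
qed

lemma sat_foldr_Ex:
  "sat N p e (foldr Ex vs \<phi>) \<longleftrightarrow>
    (\<exists>e'. (\<forall>x. x \<notin> set vs \<longrightarrow> e' x = e x) \<and> (\<forall>x\<in>set vs. e' x \<in> Univ N) \<and> sat N p e' \<phi>)"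
proof (induction vs arbitrary: e)
  case Nil
  then show ?case by (auto, metis ext)
next
  case (Cons v vs)
  show ?case
  proof
    assume "sat N p e (foldr Ex (v # vs) \<phi>)"
    then obtain a e' where "a \<in> Univ N" "\<forall>x. x \<notin> set vs \<longrightarrow> e' x = (e(v := a)) x"
      "\<forall>x\<in>set vs. e' x \<in> Univ N" "sat N p e' \<phi>"
      using Cons.IH by auto
    then show "\<exists>e'. (\<forall>x. x \<notin> set (v # vs) \<longrightarrow> e' x = e x) \<and> (\<forall>x\<in>set (v # vs). e' x \<in> Univ N)
        \<and> sat N p e' \<phi>"
      by (intro exI[of _ e']) (auto split: if_splits)
  next
    assume "\<exists>e'. (\<forall>x. x \<notin> set (v # vs) \<longrightarrow> e' x = e x) \<and> (\<forall>x\<in>set (v # vs). e' x \<in> Univ N)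
        \<and> sat N p e' \<phi>"
    then obtain e' where e': "\<forall>x. x \<notin> set (v # vs) \<longrightarrow> e' x = e x" "\<forall>x\<in>set (v # vs). e' x \<in> Univ N"
      "sat N p e' \<phi>" by blast
    then have "sat N p (e(v := e' v)) (foldr Ex vs \<phi>)"
      by (intro Cons.IH[THEN iffD2] exI[of _ e']) auto
    then show "sat N p e (foldr Ex (v # vs) \<phi>)" using e' by auto
  qed
qed

lemma is_pp_ex_closure: "is_pp (ex_closure V \<phi>) = is_pp \<phi>"
  by (simp add: ex_closure_def is_pp_foldr_Ex)

lemma fv_ex_closure: "fv (ex_closure V \<phi>) = fv \<phi> \<inter> V"
  using finite_fv[of \<phi>] by (auto simp: ex_closure_def fv_foldr_Ex)

lemma params_ex_closure: "params (ex_closure V \<phi>) = params \<phi>"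
  by (simp add: ex_closure_def params_foldr_Ex)

lemma sat_ex_closure:
  assumes e: "range e \<subseteq> Univ N"
  shows "sat N p e (ex_closure V \<phi>) \<longleftrightarrow>
    (\<exists>e'. range e' \<subseteq> Univ N \<and> (\<forall>x\<in>V. e' x = e x) \<and> sat N p e' \<phi>)"
proof -
  define vs where "vs = sorted_list_of_set (fv \<phi> - V)"
  have vs: "set vs = fv \<phi> - V"
    using finite_fv[of \<phi>] by (simp add: vs_def)
  have unfold: "sat N p e (ex_closure V \<phi>) \<longleftrightarrow>
      (\<exists>e'. (\<forall>x. x \<notin> set vs \<longrightarrow> e' x = e x) \<and> (\<forall>x\<in>set vs. e' x \<in> Univ N) \<and> sat N p e' \<phi>)"
    unfolding ex_closure_def vs_def by (rule sat_foldr_Ex)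
  show ?thesis
  proof
    assume "sat N p e (ex_closure V \<phi>)"
    then obtain e' where e': "\<forall>x. x \<notin> set vs \<longrightarrow> e' x = e x" "\<forall>x\<in>set vs. e' x \<in> Univ N"
      "sat N p e' \<phi>"
      using unfold by blast
    have "e' x \<in> Univ N" for x
      using e e' by (cases "x \<in> set vs") auto
    with e' vs show "\<exists>e'. range e' \<subseteq> Univ N \<and> (\<forall>x\<in>V. e' x = e x) \<and> sat N p e' \<phi>"
      by (intro exI[of _ e']) auto
  next
    assume "\<exists>e'. range e' \<subseteq> Univ N \<and> (\<forall>x\<in>V. e' x = e x) \<and> sat N p e' \<phi>"
    then obtain e' where e': "range e' \<subseteq> Univ N" "\<forall>x\<in>V. e' x = e x" "sat N p e' \<phi>"
      by blast
    define e'' where "e'' x = (if x \<in> set vs then e' x else e x)" for x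
    have "\<forall>x\<in>fv \<phi>. e'' x = e' x"
      using e'(2) vs by (auto simp: e''_def)
    then have "sat N p e'' \<phi>"
      using e'(3) sat_cong[of \<phi> e'' e' p p] by simp
    moreover have "\<forall>x\<in>set vs. e'' x \<in> Univ N"
      using e'(1) by (auto simp: e''_def)
    ultimately show "sat N p e (ex_closure V \<phi>)"
      unfolding unfold by (intro exI[of _ e'']) (auto simp: e''_def)
  qed
qed

section \<open>Satisfiable systems of atomic formulas\<close>

definition satisfiable :: "('r, 'c, 'a) struct \<Rightarrow> ('p \<Rightarrow> 'a) \<Rightarrow> ('r, 'c, 'p) fm list \<Rightarrow> bool" where
  "satisfiable N p L \<longleftrightarrow> (\<exists>e. range e \<subseteq> Univ N \<and> (\<forall>\<phi>\<in>set L. sat N p e \<phi>))"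

definition satisfiable_at :: "('r, 'c, 'a) struct \<Rightarrow> ('p \<Rightarrow> 'a) \<Rightarrow> ('r, 'c, 'p) fm list \<Rightarrow> 'a \<Rightarrow> bool" where
  "satisfiable_at N p L a \<longleftrightarrow> (\<exists>e. range e \<subseteq> Univ N \<and> e 0 = a \<and> (\<forall>\<phi>\<in>set L. sat N p e \<phi>))"

lemma satisfiable_iff_ex_satisfiable_at: "satisfiable N p L \<longleftrightarrow> (\<exists>a. satisfiable_at N p L a)"
  unfolding satisfiable_def satisfiable_at_def by blast

lemma satisfiable_cong:
  "(\<forall>\<phi>\<in>set L. \<forall>q\<in>params \<phi>. p q = p' q) \<Longrightarrow> satisfiable N p L = satisfiable N p' L"
  unfolding satisfiable_def by (metis sat_cong)

lemma satisfiable_map_params: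
  "\<forall>\<phi>\<in>set L. atomic \<phi> \<Longrightarrow> satisfiable N p (map (map_params g) L) = satisfiable N (p \<circ> g) L"
  unfolding satisfiable_def by (simp add: sat_map_params)

lemma satisfiable_iff_true_in_ex_closure:
  assumes "Univ N \<noteq> {}"
  shows "satisfiable N p L \<longleftrightarrow> true_in N p (ex_closure {} (conj_list L))"
proof -
  obtain u where "u \<in> Univ N" using assms by blast
  then have "\<exists>e :: nat \<Rightarrow> _. range e \<subseteq> Univ N" by (intro exI[of _ "\<lambda>_. u"]) auto
  then show ?thesis
    unfolding satisfiable_def true_in_def by (auto simp: sat_ex_closure sat_conj_list)
qed

lemma satisfiable_at_iff_sat_ex_closure:
  "satisfiable_at N p L a \<longleftrightarrow> a \<in> Univ N \<and> sat N p (\<lambda>_. a) (ex_closure {0} (conj_list L))"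
proof (cases "a \<in> Univ N")
  case True
  then have "range (\<lambda>_::nat. a) \<subseteq> Univ N" by auto
  then show ?thesis
    unfolding satisfiable_at_def by (auto simp: sat_ex_closure sat_conj_list)
next
  case False
  then show ?thesis
    unfolding satisfiable_at_def by auto
qed

text \<open>Two systems of atomic formulas, made to share only the variable 0 by moving the other
  variables of the first to even and those of the second to odd positions (truncated subtraction
  keeps 0 fixed).\<close>

definition merge_vars :: "('r, 'c, 'p) fm list \<Rightarrow> ('r, 'c, 'p) fm list \<Rightarrow> ('r, 'c, 'p) fm list" where
  "merge_vars L1 L2 =
    map (rename_vars (\<lambda>n. 2 * n)) L1 @ map (rename_vars (\<lambda>n. 2 * n - 1)) L2"

lemma atomic_merge_vars: "\<forall>\<phi>\<in>set (merge_vars L1 L2). atomic \<phi>"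
  by (auto simp: merge_vars_def)

lemma params_merge_vars:
  assumes "\<forall>\<phi>\<in>set L1 \<union> set L2. atomic \<phi>" and "\<phi>' \<in> set (merge_vars L1 L2)"
  shows "\<exists>\<phi>\<in>set L1 \<union> set L2. params \<phi>' \<subseteq> params \<phi>"
proof -
  obtain f \<phi> where "\<phi> \<in> set L1 \<union> set L2" "\<phi>' = rename_vars f \<phi>"
    using assms(2) unfolding merge_vars_def by auto
  with assms(1) params_rename_vars show ?thesis
    by blast
qed

lemma satisfiable_at_merge_vars:
  assumes "\<forall>\<phi>\<in>set L1 \<union> set L2. atomic \<phi>"
  shows "satisfiable_at N p (merge_vars L1 L2) a \<longleftrightarrow> satisfiable_at N p L1 a \<and> satisfiable_at N p L2 a"
proof -
  define f1 :: "nat \<Rightarrow> nat" where "f1 n = 2 * n" for n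
  define f2 :: "nat \<Rightarrow> nat" where "f2 n = 2 * n - 1" for n
  have sat: "(\<forall>\<phi>\<in>set (merge_vars L1 L2). sat N p e \<phi>) \<longleftrightarrow>
      (\<forall>\<phi>\<in>set L1. sat N p (e \<circ> f1) \<phi>) \<and> (\<forall>\<phi>\<in>set L2. sat N p (e \<circ> f2) \<phi>)" for e
    using assms unfolding merge_vars_def f1_def[abs_def] f2_def[abs_def]
    by (simp add: ball_Un sat_rename_vars)
  show ?thesis
  proof
    assume "satisfiable_at N p (merge_vars L1 L2) a"
    then obtain e where "range e \<subseteq> Univ N" "e 0 = a" "\<forall>\<phi>\<in>set (merge_vars L1 L2). sat N p e \<phi>"
      unfolding satisfiable_at_def by blast
    with sat show "satisfiable_at N p L1 a \<and> satisfiable_at N p L2 a"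
      unfolding satisfiable_at_def
      by (intro conjI exI[of _ "e \<circ> f1"] exI[of _ "e \<circ> f2"]) (auto simp: f1_def f2_def)
  next
    assume "satisfiable_at N p L1 a \<and> satisfiable_at N p L2 a"
    then obtain e1 e2 where e1: "range e1 \<subseteq> Univ N" "e1 0 = a" "\<forall>\<phi>\<in>set L1. sat N p e1 \<phi>"
      and e2: "range e2 \<subseteq> Univ N" "e2 0 = a" "\<forall>\<phi>\<in>set L2. sat N p e2 \<phi>"
      unfolding satisfiable_at_def by blast
    define e where "e x = (if even x then e1 (x div 2) else e2 ((x + 1) div 2))" for x
    have "e \<circ> f1 = e1"
      by (auto simp: e_def f1_def)
    moreover have "e \<circ> f2 = e2"
    proof
      fix n show "(e \<circ> f2) n = e2 n"
        using e1(2) e2(2) by (cases n) (auto simp: e_def f2_def)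
    qed
    moreover have "range e \<subseteq> Univ N"
      using e1(1) e2(1) by (auto simp: e_def)
    moreover have "e 0 = a"
      using e1(2) by (simp add: e_def)
    ultimately show "satisfiable_at N p (merge_vars L1 L2) a"
      unfolding satisfiable_at_def using sat e1(3) e2(3) by metis
  qed
qed

section \<open>Partial maps preserving pp-formulas\<close>

definition graph_apply :: "('x \<times> 'y) set \<Rightarrow> 'x \<Rightarrow> 'y" where
  "graph_apply G x = (THE y. (x, y) \<in> G)"

lemma graph_apply_eq: "single_valued G \<Longrightarrow> (x, y) \<in> G \<Longrightarrow> graph_apply G x = y"
  unfolding graph_apply_def by (rule the_equality) (auto dest: single_valuedD)

lemma graph_apply_mem: "single_valued G \<Longrightarrow> x \<in> Domain G \<Longrightarrow> (x, graph_apply G x) \<in> G"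
  using graph_apply_eq by fastforce

text \<open>Equivalently, the partial map G from M^\<omega> to M preserves every pp-formula with
  parameters from its domain.\<close>

definition pp_preserving :: "('r, 'c, 'a) struct \<Rightarrow> ((nat \<Rightarrow> 'a) \<times> 'a) set \<Rightarrow> bool" where
  "pp_preserving M G \<longleftrightarrow>
    (\<forall>L. (\<forall>\<phi>\<in>set L. atomic \<phi> \<and> params \<phi> \<subseteq> Domain G) \<longrightarrow>
      satisfiable (power_omega M) id L \<longrightarrow> satisfiable M (graph_apply G) L)"

lemma Univ_power_omega: "Univ (power_omega M) = {f. \<forall>n. f n \<in> Univ M}"
  by (simp add: power_omega_def)

lemma single_valued_zip:
  fixes as :: "(nat \<Rightarrow> 'a) list" and M :: "('r, 'c, 'a) struct"
  assumes "Univ M \<noteq> {}"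
    and transfer: "\<forall>\<phi> :: ('r, 'c, nat) fm. is_pp \<phi> \<longrightarrow> fv \<phi> = {} \<longrightarrow> params \<phi> \<subseteq> {..<length as} \<longrightarrow>
      true_in (power_omega M) (\<lambda>i. as ! i) \<phi> \<longrightarrow> true_in M (\<lambda>i. bs ! i) \<phi>"
  shows "single_valued (set (zip as bs))"
proof (rule single_valuedI)
  fix x y z assume "(x, y) \<in> set (zip as bs)" "(x, z) \<in> set (zip as bs)"
  then obtain i j where ij: "i < length as" "j < length as" "as ! i = x" "as ! j = x"
    "bs ! i = y" "bs ! j = z"
    by (auto simp: set_zip)
  define \<phi> :: "('r, 'c, nat) fm" where "\<phi> = Eq (Par i) (Par j)"
  have "true_in (power_omega M) (\<lambda>i. as ! i) \<phi>"
    using ij by (simp add: \<phi>_def true_in_def)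
  then have "true_in M (\<lambda>i. bs ! i) \<phi>"
    using transfer ij(1,2) by (auto simp: \<phi>_def)
  moreover obtain u where "u \<in> Univ M"
    using assms(1) by blast
  ultimately show "y = z"
    using ij by (auto simp: \<phi>_def true_in_def)
qed

lemma pp_preserving_zip:
  fixes as :: "(nat \<Rightarrow> 'a) list" and M :: "('r, 'c, 'a) struct"
  assumes "Univ M \<noteq> {}" "length as = length bs"
    and transfer: "\<forall>\<phi> :: ('r, 'c, nat) fm. is_pp \<phi> \<longrightarrow> fv \<phi> = {} \<longrightarrow> params \<phi> \<subseteq> {..<length as} \<longrightarrow>
      true_in (power_omega M) (\<lambda>i. as ! i) \<phi> \<longrightarrow> true_in M (\<lambda>i. bs ! i) \<phi>"
  shows "pp_preserving M (set (zip as bs))"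
  unfolding pp_preserving_def
proof (intro allI impI)
  define G where "G = set (zip as bs)"
  fix L :: "('r, 'c, nat \<Rightarrow> 'a) fm list"
  assume L: "\<forall>\<phi>\<in>set L. atomic \<phi> \<and> params \<phi> \<subseteq> Domain (set (zip as bs))"
    and sat: "satisfiable (power_omega M) id L"
  have atomic_L: "\<forall>\<phi>\<in>set L. atomic \<phi>" and params_L: "\<forall>\<phi>\<in>set L. \<forall>q\<in>params \<phi>. q \<in> Domain G"
    using L by (auto simp: G_def)
  define idx where "idx q = (SOME i. i < length as \<and> as ! i = q)" for q
  have idx: "idx q < length as \<and> as ! idx q = q" if "q \<in> Domain G" for q
  proof -
    have "\<exists>i. i < length as \<and> as ! i = q"
      using that assms(2) by (auto simp: G_def set_zip)
    then show ?thesis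
      unfolding idx_def by (rule someI_ex)
  qed
  have graph_apply_idx: "graph_apply G q = bs ! idx q" if "q \<in> Domain G" for q
  proof (rule graph_apply_eq)
    show "single_valued G"
      unfolding G_def using assms(1) transfer by (rule single_valued_zip)
    show "(q, bs ! idx q) \<in> G"
      using idx[OF that] assms(2) unfolding G_def in_set_zip by (intro exI[of _ "idx q"]) auto
  qed
  define \<Phi> where "\<Phi> = ex_closure {} (conj_list (map (map_params idx) L))"
  have "satisfiable (power_omega M) ((!) as \<circ> idx) L"
    using sat satisfiable_cong[of L "(!) as \<circ> idx" id] params_L idx by simp
  then have sat_idx: "satisfiable (power_omega M) ((!) as) (map (map_params idx) L)"
    by (simp add: satisfiable_map_params[OF atomic_L])
  then have "Univ (power_omega M) \<noteq> {}"
    by (auto simp: satisfiable_def)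
  with sat_idx have "true_in (power_omega M) (\<lambda>i. as ! i) \<Phi>"
    unfolding \<Phi>_def by (simp add: satisfiable_iff_true_in_ex_closure)
  moreover have "params \<Phi> \<subseteq> {..<length as}"
  proof -
    have "params (map_params idx \<phi>) \<subseteq> {..<length as}" if "\<phi> \<in> set L" for \<phi>
      using that atomic_L params_L idx params_map_params[of \<phi> idx] by fastforce
    then show ?thesis
      by (auto simp: \<Phi>_def params_ex_closure params_conj_list)
  qed
  moreover have "is_pp \<Phi>" "fv \<Phi> = {}"
    using is_pp_conj_list[of "map (map_params idx) L"]
    by (simp_all add: \<Phi>_def is_pp_ex_closure fv_ex_closure)
  ultimately have "true_in M (\<lambda>i. bs ! i) \<Phi>"
    using transfer by blast
  then have "satisfiable M ((!) bs) (map (map_params idx) L)"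
    unfolding \<Phi>_def using assms(1) by (simp add: satisfiable_iff_true_in_ex_closure)
  then have "satisfiable M ((!) bs \<circ> idx) L"
    by (simp add: satisfiable_map_params[OF atomic_L])
  then show "satisfiable M (graph_apply (set (zip as bs))) L"
    using satisfiable_cong[of L "graph_apply G" "(!) bs \<circ> idx"] params_L graph_apply_idx
    by (simp add: G_def)
qed

lemma pp_preserving_Union_chain:
  assumes "C \<noteq> {}" "subset.chain \<A> C" "\<forall>X\<in>C. single_valued X \<and> pp_preserving M X"
  shows "single_valued (\<Union>C)" "pp_preserving M (\<Union>C)"
proof -
  show sv: "single_valued (\<Union>C)"
  proof (rule single_valuedI)
    fix x y z assume "(x, y) \<in> \<Union>C" "(x, z) \<in> \<Union>C"
    then obtain X Y where XY: "X \<in> C" "Y \<in> C" "(x, y) \<in> X" "(x, z) \<in> Y"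
      by blast
    with assms(2) have "X \<subseteq> Y \<or> Y \<subseteq> X"
      unfolding subset_chain_def by blast
    with XY assms(3) show "y = z"
      by (auto dest: single_valuedD)
  qed
  show "pp_preserving M (\<Union>C)"
    unfolding pp_preserving_def
  proof (intro allI impI)
    fix L
    assume L: "\<forall>\<phi>\<in>set L. atomic \<phi> \<and> params \<phi> \<subseteq> Domain (\<Union>C)"
      and sat: "satisfiable (power_omega M) id L"
    define S where "S = (\<lambda>q. (q, graph_apply (\<Union>C) q)) ` (\<Union>\<phi>\<in>set L. params \<phi>)"
    have "finite S"
      using finite_params by (auto simp: S_def)
    moreover have "S \<subseteq> \<Union>C"
    proof
      fix s assume "s \<in> S"
      then obtain q \<phi> where "\<phi> \<in> set L" "q \<in> params \<phi>" "s = (q, graph_apply (\<Union>C) q)"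
        by (auto simp: S_def)
      with L graph_apply_mem[OF sv] show "s \<in> \<Union>C"
        by blast
    qed
    ultimately obtain X where X: "X \<in> C" "S \<subseteq> X"
      using finite_subset_Union_chain[OF _ _ assms(1,2)] by blast
    have in_X: "(q, graph_apply (\<Union>C) q) \<in> X" if "\<phi> \<in> set L" "q \<in> params \<phi>" for q \<phi>
      using X(2) that unfolding S_def by blast
    have X_pres: "single_valued X" "pp_preserving M X"
      using X(1) assms(3) by auto
    have "\<forall>\<phi>\<in>set L. atomic \<phi> \<and> params \<phi> \<subseteq> Domain X"
      using L in_X by blast
    with X_pres(2) sat have "satisfiable M (graph_apply X) L"
      unfolding pp_preserving_def by blast
    moreover have "\<forall>\<phi>\<in>set L. \<forall>q\<in>params \<phi>. graph_apply (\<Union>C) q = graph_apply X q"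
      using in_X graph_apply_eq[OF X_pres(1)] by metis
    ultimately show "satisfiable M (graph_apply (\<Union>C)) L"
      using satisfiable_cong by blast
  qed
qed

lemma is_hom_graph_apply:
  assumes M: "wf_struct ar M" and G: "single_valued G" "G \<subseteq> Univ (power_omega M) \<times> Univ M"
    "Domain G = Univ (power_omega M)" "pp_preserving M G"
  shows "is_hom (power_omega M) M (graph_apply G)"
proof -
  obtain u where u: "u \<in> Univ M"
    using M by (auto simp: wf_struct_def)
  have satisfiable: "satisfiable (power_omega M) id L"
    if "\<forall>\<phi>\<in>set L. sat (power_omega M) id (\<lambda>_ _. u) \<phi>" for L
    using that u unfolding satisfiable_def by (intro exI[of _ "\<lambda>_ _. u"]) (auto simp: Univ_power_omega)
  have preserves: "\<exists>e. sat M (graph_apply G) e \<phi>"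
    if "atomic \<phi>" "params \<phi> \<subseteq> Univ (power_omega M)" "sat (power_omega M) id (\<lambda>_ _. u) \<phi>" for \<phi>
  proof -
    have "satisfiable M (graph_apply G) [\<phi>]"
      using G(3,4) that satisfiable[of "[\<phi>]"] unfolding pp_preserving_def by auto
    then show ?thesis
      by (auto simp: satisfiable_def)
  qed
  have "graph_apply G x \<in> Univ M" if "x \<in> Univ (power_omega M)" for x
  proof -
    have "(x, graph_apply G x) \<in> G"
      using G(1,3) that by (simp add: graph_apply_mem)
    with G(2) show ?thesis
      by blast
  qed
  moreover have "Rel M R (map (graph_apply G) xs)"
    if "set xs \<subseteq> Univ (power_omega M)" "Rel (power_omega M) R xs" for R xs
    using preserves[of "Atom R (map Par xs)"] that by (auto simp: comp_def)
  moreover have "graph_apply G (Cst (power_omega M) c) = Cst M c" for c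
    using preserves[of "Eq (Par (Cst (power_omega M) c)) (Con c)"] M
    by (auto simp: wf_struct_def power_omega_def)
  ultimately show ?thesis
    unfolding is_hom_def by blast
qed

section \<open>Extending a pp-preserving map by one point\<close>

lemma satisfiable_at_map_params:
  "\<forall>\<phi>\<in>set L. atomic \<phi> \<Longrightarrow> satisfiable_at N p (map (map_params g) L) a = satisfiable_at N (p \<circ> g) L a"
  unfolding satisfiable_at_def by (simp add: sat_map_params)

lemma sat_ex_closure_map_params:
  assumes "\<forall>\<phi>\<in>set L. atomic \<phi>" "b \<in> Univ N"
  shows "sat N id (\<lambda>_. b) (ex_closure {0} (conj_list (map (map_params g) L))) \<longleftrightarrow> satisfiable_at N g L b"
proof -
  have "satisfiable_at N id (map (map_params g) L) b \<longleftrightarrow> satisfiable_at N g L b"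
    using satisfiable_at_map_params[OF assms(1), of N id g b] by simp
  with assms(2) show ?thesis
    by (simp add: satisfiable_at_iff_sat_ex_closure)
qed

definition abstract_param :: "'p \<Rightarrow> ('r, 'c, 'p) fm \<Rightarrow> ('r, 'c, 'p) fm" where
  "abstract_param a = subst_atom (\<lambda>n. Var (Suc n)) (\<lambda>q. if q = a then Var 0 else Par q)"

lemma sat_abstract_param:
  "atomic \<phi> \<Longrightarrow> sat N p e (abstract_param a \<phi>) = sat N (p(a := e 0)) (e \<circ> Suc) \<phi>"
proof -
  have "(\<lambda>q. teval N p e (if q = a then Var 0 else Par q)) = p(a := e 0)"
    by auto
  then show "atomic \<phi> \<Longrightarrow> ?thesis"
    by (simp add: abstract_param_def sat_subst_atom comp_def)
qed

lemma params_abstract_param: "atomic \<phi> \<Longrightarrow> params (abstract_param a \<phi>) \<subseteq> params \<phi> - {a}"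
  using params_subst_atom[of \<phi> "\<lambda>n. Var (Suc n)" "\<lambda>q. if q = a then Var 0 else Par q"]
  by (auto simp: abstract_param_def split: if_splits)

text \<open>The pp-type of a over the domain of G, transported along G into M: its realisations are
  the possible images of a.\<close>

definition pp_type :: "('r, 'c, 'a) struct \<Rightarrow> ((nat \<Rightarrow> 'a) \<times> 'a) set \<Rightarrow> (nat \<Rightarrow> 'a) \<Rightarrow> ('r, 'c, 'a) fm set"
  where
  "pp_type M G a =
    {ex_closure {0} (conj_list (map (map_params (graph_apply G)) L)) | L.
      (\<forall>\<phi>\<in>set L. atomic \<phi> \<and> params \<phi> \<subseteq> Domain G) \<and> satisfiable_at (power_omega M) id L a}"

lemma pp_type_params:
  assumes "\<psi> \<in> pp_type M G a"
  shows "fv \<psi> \<subseteq> {0}" "params \<psi> \<subseteq> graph_apply G ` Domain G"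
proof -
  obtain L where L: "\<forall>\<phi>\<in>set L. atomic \<phi> \<and> params \<phi> \<subseteq> Domain G"
    and \<psi>: "\<psi> = ex_closure {0} (conj_list (map (map_params (graph_apply G)) L))"
    using assms unfolding pp_type_def by blast
  show "fv \<psi> \<subseteq> {0}"
    by (simp add: \<psi> fv_ex_closure)
  have "params (map_params (graph_apply G) \<phi>) \<subseteq> graph_apply G ` Domain G" if "\<phi> \<in> set L" for \<phi>
    using that L params_map_params[of \<phi> "graph_apply G"] by blast
  then show "params \<psi> \<subseteq> graph_apply G ` Domain G"
    by (auto simp: \<psi> params_ex_closure params_conj_list)
qed

lemma pp_type_finite_subset:
  assumes "finite F" "F \<subseteq> pp_type M G a" "a \<in> Univ (power_omega M)"
  shows "\<exists>L. (\<forall>\<phi>\<in>set L. atomic \<phi> \<and> params \<phi> \<subseteq> Domain G) \<and> satisfiable_at (power_omega M) id L a \<and>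
    (\<forall>b\<in>Univ M. satisfiable_at M (graph_apply G) L b \<longrightarrow> (\<forall>\<psi>\<in>F. sat M id (\<lambda>_. b) \<psi>))"
  using assms(1,2)
proof (induction F rule: finite_induct)
  case empty
  have "satisfiable_at (power_omega M) id [] a"
    using assms(3) unfolding satisfiable_at_def by (intro exI[of _ "\<lambda>_. a"]) auto
  then show ?case
    by (intro exI[of _ "[]"]) (simp add: id_def)
next
  case (insert \<psi> F)
  then obtain L2 where L2: "\<forall>\<phi>\<in>set L2. atomic \<phi> \<and> params \<phi> \<subseteq> Domain G"
    "satisfiable_at (power_omega M) id L2 a"
    "\<forall>b\<in>Univ M. satisfiable_at M (graph_apply G) L2 b \<longrightarrow> (\<forall>\<psi>\<in>F. sat M id (\<lambda>_. b) \<psi>)"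
    by blast
  obtain L1 where L1: "\<forall>\<phi>\<in>set L1. atomic \<phi> \<and> params \<phi> \<subseteq> Domain G"
    "satisfiable_at (power_omega M) id L1 a"
    and \<psi>: "\<psi> = ex_closure {0} (conj_list (map (map_params (graph_apply G)) L1))"
    using insert.prems unfolding pp_type_def by blast
  have atomic: "\<forall>\<phi>\<in>set L1 \<union> set L2. atomic \<phi>"
    using L1(1) L2(1) by auto
  have "\<forall>\<phi>\<in>set (merge_vars L1 L2). atomic \<phi> \<and> params \<phi> \<subseteq> Domain G"
    using atomic_merge_vars params_merge_vars[OF atomic] L1(1) L2(1) by blast
  moreover have "satisfiable_at (power_omega M) id (merge_vars L1 L2) a"
    using L1(2) L2(2) by (simp add: satisfiable_at_merge_vars[OF atomic])
  moreover have "\<forall>\<psi>'\<in>insert \<psi> F. sat M id (\<lambda>_. b) \<psi>'"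
    if "b \<in> Univ M" "satisfiable_at M (graph_apply G) (merge_vars L1 L2) b" for b
    using that L1(1) L2(3) by (simp add: satisfiable_at_merge_vars[OF atomic] \<psi> sat_ex_closure_map_params)
  ultimately show ?case
    by blast
qed

lemma pp_type_consistent:
  assumes "pp_preserving M G" "a \<in> Univ (power_omega M)"
  shows "consistent_with_theory M (pp_type M G a)"
  unfolding consistent_with_theory_def
proof (intro allI impI)
  fix F assume "F \<subseteq> pp_type M G a" "finite F"
  then obtain L where L: "\<forall>\<phi>\<in>set L. atomic \<phi> \<and> params \<phi> \<subseteq> Domain G"
    "satisfiable_at (power_omega M) id L a"
    "\<forall>b\<in>Univ M. satisfiable_at M (graph_apply G) L b \<longrightarrow> (\<forall>\<psi>\<in>F. sat M id (\<lambda>_. b) \<psi>)"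
    using pp_type_finite_subset[OF _ _ assms(2)] by blast
  have "satisfiable (power_omega M) id L"
    using L(2) satisfiable_iff_ex_satisfiable_at by blast
  with assms(1) L(1) have "satisfiable M (graph_apply G) L"
    unfolding pp_preserving_def by blast
  then obtain b where b: "satisfiable_at M (graph_apply G) L b"
    unfolding satisfiable_iff_ex_satisfiable_at by blast
  then have "b \<in> Univ M"
    unfolding satisfiable_at_def by auto
  with b L(3) show "realised M F"
    unfolding realised_def by (intro bexI[of _ b]) auto
qed

lemma pp_preserving_insert:
  assumes G: "single_valued G" "a \<notin> Domain G" "a \<in> Univ (power_omega M)"
    and b: "b \<in> Univ M" "\<forall>\<psi>\<in>pp_type M G a. sat M id (\<lambda>_. b) \<psi>"
  shows "pp_preserving M (insert (a, b) G)"
  unfolding pp_preserving_def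
proof (intro allI impI)
  define G' where "G' = insert (a, b) G"
  fix L' assume L': "\<forall>\<phi>\<in>set L'. atomic \<phi> \<and> params \<phi> \<subseteq> Domain (insert (a, b) G)"
    and "satisfiable (power_omega M) id L'"
  then obtain e where e: "range e \<subseteq> Univ (power_omega M)" "\<forall>\<phi>\<in>set L'. sat (power_omega M) id e \<phi>"
    unfolding satisfiable_def by blast
  have atomic: "\<forall>\<phi>\<in>set L'. atomic \<phi>"
    using L' by blast
  define L where "L = map (abstract_param a) L'"
  have L: "\<forall>\<phi>\<in>set L. atomic \<phi> \<and> params \<phi> \<subseteq> Domain G"
  proof
    fix \<phi> assume "\<phi> \<in> set L"
    then obtain \<phi>' where "\<phi>' \<in> set L'" "\<phi> = abstract_param a \<phi>'"
      by (auto simp: L_def)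
    moreover from this(1) have "atomic \<phi>'" "params \<phi>' \<subseteq> insert a (Domain G)"
      using L' by auto
    then have "params (abstract_param a \<phi>') \<subseteq> Domain G"
      using params_abstract_param[of \<phi>' a] by blast
    ultimately show "atomic \<phi> \<and> params \<phi> \<subseteq> Domain G"
      by (simp add: abstract_param_def)
  qed
  moreover have "satisfiable_at (power_omega M) id L a"
  proof -
    have "id(a := a) = id" "case_nat a e \<circ> Suc = e"
      by auto
    moreover have "range (case_nat a e) \<subseteq> Univ (power_omega M)"
      using e(1) G(3) by (auto split: nat.splits dest: range_subsetD)
    ultimately show ?thesis
      unfolding satisfiable_at_def using e(2) atomic
      by (intro exI[of _ "case_nat a e"]) (simp add: L_def sat_abstract_param)
  qed
  ultimately have "ex_closure {0} (conj_list (map (map_params (graph_apply G)) L)) \<in> pp_type M G a"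
    unfolding pp_type_def mem_Collect_eq by (intro exI[of _ L] conjI refl)
  then have "satisfiable_at M (graph_apply G) L b"
    using b L sat_ex_closure_map_params[of L b M "graph_apply G"] by simp
  then obtain e' where e': "range e' \<subseteq> Univ M" "e' 0 = b" "\<forall>\<phi>\<in>set L. sat M (graph_apply G) e' \<phi>"
    unfolding satisfiable_at_def by blast
  have sat_L': "sat M ((graph_apply G)(a := b)) (e' \<circ> Suc) \<phi>" if "\<phi> \<in> set L'" for \<phi>
    using e'(2,3) that atomic sat_abstract_param[of \<phi> M "graph_apply G" e' a] by (simp add: L_def)
  have sv: "single_valued G'"
  proof (rule single_valuedI)
    fix x y z assume "(x, y) \<in> G'" "(x, z) \<in> G'"
    with G(1,2) show "y = z"
      by (auto simp: G'_def dest: single_valuedD)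
  qed
  have graph_apply_G': "graph_apply G' q = ((graph_apply G)(a := b)) q" if "q \<in> Domain G'" for q
  proof (cases "q = a")
    case True
    then show ?thesis
      using graph_apply_eq[OF sv, of a b] by (simp add: G'_def)
  next
    case False
    with that obtain y where "(q, y) \<in> G"
      by (auto simp: G'_def)
    with False show ?thesis
      using graph_apply_eq[OF sv, of q y] graph_apply_eq[OF G(1), of q y] by (simp add: G'_def)
  qed
  have "sat M (graph_apply G') (e' \<circ> Suc) \<phi>" if "\<phi> \<in> set L'" for \<phi>
  proof -
    have "params \<phi> \<subseteq> Domain G'"
      using L' that by (simp add: G'_def)
    then have "\<forall>q\<in>params \<phi>. graph_apply G' q = ((graph_apply G)(a := b)) q"
      using graph_apply_G' by blast
    then show ?thesis
      using sat_L'[OF that] sat_cong[of \<phi> "e' \<circ> Suc" "e' \<circ> Suc" "graph_apply G'" "(graph_apply G)(a := b)"]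
      by simp
  qed
  moreover have "range (e' \<circ> Suc) \<subseteq> Univ M"
    using e'(1) by auto
  ultimately show "satisfiable M (graph_apply (insert (a, b) G)) L'"
    unfolding satisfiable_def G'_def by blast
qed

lemma pp_preserving_extend:
  assumes "saturated M" and G: "single_valued G" "G \<subseteq> Univ (power_omega M) \<times> Univ M" "pp_preserving M G"
    and small: "graph_apply G ` Domain G \<prec> Univ M"
    and a: "a \<in> Univ (power_omega M)" "a \<notin> Domain G"
  shows "\<exists>b\<in>Univ M. pp_preserving M (insert (a, b) G)"
proof -
  have "graph_apply G ` Domain G \<subseteq> Univ M"
  proof
    fix y assume "y \<in> graph_apply G ` Domain G"
    then obtain x where "x \<in> Domain G" "y = graph_apply G x"
      by blast
    with G(2) graph_apply_mem[OF G(1), of x] show "y \<in> Univ M"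
      by blast
  qed
  moreover have "\<forall>\<psi>\<in>pp_type M G a. fv \<psi> \<subseteq> {0} \<and> params \<psi> \<subseteq> graph_apply G ` Domain G"
    using pp_type_params by blast
  moreover note small pp_type_consistent[OF G(3) a(1)]
  ultimately have "realised M (pp_type M G a)"
    using assms(1) unfolding saturated_def by (elim conjE allE impE)
  then obtain b where "b \<in> Univ M" "\<forall>\<psi>\<in>pp_type M G a. sat M id (\<lambda>_. b) \<psi>"
    unfolding realised_def by blast
  then show ?thesis
    using pp_preserving_insert[OF G(1) a(2,1)] by blast
qed

section \<open>The transfinite construction\<close>

unbundle cardinal_syntax

lemma image_lesspoll_if_subset_underS:
  fixes A :: "'x set" and U :: "'y set" and f :: "'x \<Rightarrow> 'y"
  assumes "finite D" "infinite A" "A \<approx> U" "a \<in> A" "B \<subseteq> D \<union> underS |A| a"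
  shows "f ` B \<prec> U"
proof -
  have "|underS |A| a| <o |A|"
    using card_of_underS[OF card_of_Card_order, of a A] assms(4) by (simp add: Field_card_of)
  moreover have "|D| <o |A|"
    using finite_ordLess_infinite[OF card_of_Well_order card_of_Well_order] assms(1,2)
    by (simp add: Field_card_of)
  ultimately have "|D \<union> underS |A| a| <o |A|"
    using card_of_Un_ordLess_infinite[OF assms(2)] by blast
  moreover have "|f ` B| \<le>o |D \<union> underS |A| a|"
    using card_of_image[of f B] card_of_mono1[OF assms(5)] ordLeq_transitive by blast
  moreover have "|A| =o |U|"
    using assms(3) eqpoll_iff_card_of_ordIso by blast
  ultimately have "|f ` B| <o |U|"
    using ordLeq_ordLess_trans ordLess_ordIso_trans by blast
  then show ?thesis
    unfolding lesspoll_def lepoll_def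
    by (metis card_of_ordLeq eqpoll_iff_card_of_ordIso not_ordLess_ordIso ordLess_imp_ordLeq)
qed

text \<open>Zorn's lemma is applied to maps whose domain, outside the finite Domain G0, is downward
  closed for a well-order of M^\<omega> of order type |M^\<omega>|. A maximal such map that is not total then
  has its domain inside Domain G0 and the initial segment below the least missing point, hence of
  size < |M| as saturation requires.\<close>

lemma pp_preserving_extends_to_total:
  assumes "saturated M" and card: "Univ (power_omega M) \<approx> Univ M"
    and G0: "single_valued G0" "G0 \<subseteq> Univ (power_omega M) \<times> Univ M" "finite (Domain G0)"
      "pp_preserving M G0"
  shows "\<exists>G. G0 \<subseteq> G \<and> single_valued G \<and> G \<subseteq> Univ (power_omega M) \<times> Univ M \<and>
    Domain G = Univ (power_omega M) \<and> pp_preserving M G"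
proof -
  define P where "P = Univ (power_omega M)"
  define r where "r = |P|"
  have Field_r: "Field r = P" and wo: "wo_rel r"
    unfolding r_def by (simp_all add: Field_card_of Card_order_wo_rel[OF card_of_Card_order])
  define \<G> where "\<G> = {G. G0 \<subseteq> G \<and> single_valued G \<and> G \<subseteq> P \<times> Univ M \<and> pp_preserving M G \<and>
    (\<forall>x\<in>Domain G - Domain G0. under r x \<subseteq> Domain G)}"
  have "\<exists>Gm\<in>\<G>. \<forall>G\<in>\<G>. Gm \<subseteq> G \<longrightarrow> G = Gm"
  proof (rule subset_Zorn_nonempty)
    have "G0 \<in> \<G>"
      using G0 by (simp add: \<G>_def P_def)
    then show "\<G> \<noteq> {}"
      by blast
    fix C assume C: "C \<noteq> {}" "subset.chain \<G> C"
    then have mem: "G0 \<subseteq> X \<and> single_valued X \<and> X \<subseteq> P \<times> Univ M \<and> pp_preserving M X \<and>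
        (\<forall>x\<in>Domain X - Domain G0. under r x \<subseteq> Domain X)" if "X \<in> C" for X
      using that unfolding subset_chain_def \<G>_def by blast
    have "single_valued (\<Union>C)" "pp_preserving M (\<Union>C)"
      using pp_preserving_Union_chain[OF C] mem by blast+
    moreover have "under r x \<subseteq> Domain (\<Union>C)" if x: "x \<in> Domain (\<Union>C) - Domain G0" for x
    proof -
      obtain X where "X \<in> C" "x \<in> Domain X"
        using x by blast
      with x mem[of X] show ?thesis
        by blast
    qed
    moreover have "G0 \<subseteq> \<Union>C" "\<Union>C \<subseteq> P \<times> Univ M"
      using C(1) mem by blast+
    ultimately show "\<Union>C \<in> \<G>"
      unfolding \<G>_def by blast
  qed
  then obtain Gm where "Gm \<in> \<G>" and maximal: "\<forall>G\<in>\<G>. Gm \<subseteq> G \<longrightarrow> G = Gm"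
    by blast
  then have Gm: "G0 \<subseteq> Gm" "single_valued Gm" "Gm \<subseteq> P \<times> Univ M" "pp_preserving M Gm"
    "\<forall>x\<in>Domain Gm - Domain G0. under r x \<subseteq> Domain Gm"
    unfolding \<G>_def by blast+
  have "Domain Gm = P"
  proof (rule ccontr)
    assume "Domain Gm \<noteq> P"
    moreover have Dom_P: "Domain Gm \<subseteq> P"
      using Gm(3) by blast
    ultimately have ne: "P - Domain Gm \<noteq> {}"
      by blast
    define a where "a = wo_rel.minim r (P - Domain Gm)"
    have a: "a \<in> P" "a \<notin> Domain Gm"
      using wo_rel.minim_in[OF wo _ ne] Field_r by (auto simp: a_def)
    have a_least: "(a, y) \<in> r" if "y \<in> P - Domain Gm" for y
      using wo_rel.minim_least[OF wo _ that] Field_r by (simp add: a_def)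
    have "Domain Gm \<subseteq> Domain G0 \<union> underS r a"
    proof
      fix x assume x: "x \<in> Domain Gm"
      show "x \<in> Domain G0 \<union> underS r a"
      proof (cases "x \<in> Domain G0")
        case False
        with x Gm(5) have "under r x \<subseteq> Domain Gm"
          by blast
        with a(2) have "(a, x) \<notin> r"
          by (auto simp: under_def)
        moreover have "(x, a) \<in> r \<or> (a, x) \<in> r"
          using wo_rel.TOTALS[OF wo] x Dom_P a(1) Field_r by blast
        ultimately show ?thesis
          using x a(2) by (auto simp: underS_def)
      qed simp
    qed
    moreover have "infinite P"
      using assms(1) card eqpoll_finite_iff unfolding saturated_def P_def by blast
    ultimately have "graph_apply Gm ` Domain Gm \<prec> Univ M"
      using image_lesspoll_if_subset_underS[OF G0(3) _ card[folded P_def] a(1)] by (simp add: r_def)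
    then obtain b where b: "b \<in> Univ M" "pp_preserving M (insert (a, b) Gm)"
      using pp_preserving_extend[OF assms(1) Gm(2) Gm(3)[unfolded P_def] Gm(4)] a
      by (auto simp: P_def)
    have "under r x \<subseteq> Domain (insert (a, b) Gm)"
      if x: "x \<in> Domain (insert (a, b) Gm) - Domain G0" for x
    proof (cases "x = a")
      case True
      have "y \<in> Domain (insert (a, b) Gm)" if y: "(y, a) \<in> r" for y
      proof (rule ccontr)
        assume y_notin: "y \<notin> Domain (insert (a, b) Gm)"
        moreover have "y \<in> P"
          using y Field_r by (auto intro: FieldI1)
        ultimately have "(a, y) \<in> r"
          using a_least by simp
        with y have "y = a"
          using wo_rel.ANTISYM[OF wo] by (auto simp: antisym_def)
        with y_notin show False
          by simp
      qed
      with True show ?thesis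
        by (auto simp: under_def)
    next
      case False
      with x Gm(5) show ?thesis
        by auto
    qed
    moreover have "single_valued (insert (a, b) Gm)"
    proof (rule single_valuedI)
      fix x y z assume "(x, y) \<in> insert (a, b) Gm" "(x, z) \<in> insert (a, b) Gm"
      with Gm(2) a(2) show "y = z"
        by (auto dest: single_valuedD)
    qed
    moreover have "G0 \<subseteq> insert (a, b) Gm" "insert (a, b) Gm \<subseteq> P \<times> Univ M"
      using Gm(1,3) a(1) b(1) by auto
    ultimately have "insert (a, b) Gm \<in> \<G>"
      using b(2) unfolding \<G>_def by blast
    with maximal a(2) show False
      by blast
  qed
  with Gm(1-4) show ?thesis
    by (auto simp: P_def)
qed

theorem lemma3:
  fixes ar :: "'r \<Rightarrow> nat" and M :: "('r, 'c, 'a) struct"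
  assumes "wf_struct ar M"
    and "saturated M"
    and "{f :: nat \<Rightarrow> 'a. \<forall>n. f n \<in> Univ M} \<approx> Univ M"
  shows "hom_lifting M"
  unfolding hom_lifting_def
proof (intro allI impI)
  fix as :: "(nat \<Rightarrow> 'a) list" and bs :: "'a list"
  assume len: "length as = length bs" and as: "set as \<subseteq> Univ (power_omega M)" and bs: "set bs \<subseteq> Univ M"
    and transfer: "\<forall>\<phi> :: ('r, 'c, nat) fm. is_pp \<phi> \<longrightarrow> fv \<phi> = {} \<longrightarrow> params \<phi> \<subseteq> {..<length as} \<longrightarrow>
      true_in (power_omega M) (\<lambda>i. as ! i) \<phi> \<longrightarrow> true_in M (\<lambda>i. bs ! i) \<phi>"
  have U: "Univ M \<noteq> {}"
    using assms(1) by (simp add: wf_struct_def)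
  define G0 where "G0 = set (zip as bs)"
  have sv: "single_valued G0" and pres: "pp_preserving M G0"
    unfolding G0_def using single_valued_zip[OF U transfer] pp_preserving_zip[OF U len transfer] .
  have sub: "G0 \<subseteq> Univ (power_omega M) \<times> Univ M"
    using as bs by (auto simp: G0_def dest: set_zip_leftD set_zip_rightD)
  have fin: "finite (Domain G0)"
    by (simp add: G0_def finite_Domain)
  have card: "Univ (power_omega M) \<approx> Univ M"
    using assms(3) by (simp add: Univ_power_omega)
  obtain G where G: "G0 \<subseteq> G" "single_valued G" "G \<subseteq> Univ (power_omega M) \<times> Univ M"
    "Domain G = Univ (power_omega M)" "pp_preserving M G"
    using pp_preserving_extends_to_total[OF assms(2) card sv sub fin pres] by blast
  have "graph_apply G (as ! i) = bs ! i" if "i < length as" for i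
  proof (rule graph_apply_eq[OF G(2)])
    have "(as ! i, bs ! i) \<in> G0"
      using nth_mem[of i "zip as bs"] that len by (simp add: G0_def)
    with G(1) show "(as ! i, bs ! i) \<in> G"
      by blast
  qed
  with is_hom_graph_apply[OF assms(1) G(2-5)]
  show "\<exists>h. is_hom (power_omega M) M h \<and> (\<forall>i < length as. h (as ! i) = bs ! i)"
    by blast
qed

end
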